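(* For every $k\in\mathbb{N}$ and every $\ell\in\{1,\dots,N\}$, \[\mathrm{mR}(\lambda^k_\ell)\le\mathcal{O}\big(|V|^{(|V|+3)(|\Pi|+2)}\big)\quad\text{and}\quad\mathrm{mR}(\lambda^k_{\ge\ell})\le\mathcal{O}\big(|V|^{(|V|+3)(|\Pi|+2)}\big).\]
   Context: Let $\mathcal{G}$ be a quantitative reachability game on an arena $G=(\Pi,V,(V_i)_{i\in\Pi},E)$ (finite player set $\Pi$, finite vertex set $V$ with $|V|\ge2$, $|\Pi|\le|V|$, partition $(V_i)$, every vertex has a successor) with targets $F_i\subseteq V$ and costs $\mathrm{Cost}_i(\rho)=$ least $k$ with $\rho_k\in F_i$ (or $+\infty$); $v_0\in V$. Extended game: arena $X$ with vertices $V^X=V\times2^\Pi$, edges $((v,I),(v',I'))\in E^X$ iff $(v,v')\in E$ and $I'=I\cup\{i:v'\in F_i\}$, $(v,I)\in V^X_i$ iff $v\in V_i$, targets $F^X_i=\{(v,I):i\in I\}$ with corresponding costs; $x_0=(v_0,\{i:v_0\in F_i\})$; $I(u)$ is the second component. $\mathcal{I}$ is the set of $I$ with some $(v,I)$ reachable from $x_0$, $N=|\mathcal{I}|$, $J_1<\dots<J_N$ a fixed total order of $\mathcal{I}$ extending $I<I'$ iff $I\ne I'$ and some $(v',I')$ is reachable from some $(v,I)$. $V^{J_n}=\{(v,J_n):v\in V\}$, $V^{\ge J_n}=\bigcup_{m\ge n}V^{J_m}$. Labelings: for $\lambda:V^X\to\mathbb{N}\cup\{+\infty\}$, a play $\rho$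 of $X$ is $\lambda$-consistent if $\mathrm{Cost}_i(\rho_{\ge n})\le\lambda(\rho_n)$ whenever $\rho_n\in V^X_i$. $\lambda^0(u)=0$ if $u\in V^X_i$ and $i\in I(u)$, else $+\infty$. The update of $\lambda^k$ w.r.t. $V^{\ge J_n}$ keeps values outside $V^{\ge J_n}$ and for $u\in V^{\ge J_n}\cap V^X_i$ sets $\lambda^{k+1}(u)=0$ if $i\in I(u)$, otherwise $1+\min_{(u,u')\in E^X}\sup\{\mathrm{Cost}_i(\rho):\rho$ a $\lambda^k$-consistent play from $u'\}$ ($1+(+\infty)=+\infty$). The sequence $(\lambda^k)$ is generated by $n_0=N$, $\lambda^{k+1}=$ update of $\lambda^k$ w.r.t. $V^{\ge J_{n_k}}$, $n_{k+1}=n_k-1$ if $\lambda^{k+1}=\lambda^k$ and $n_k>1$, else $n_{k+1}=n_k$. $\mathrm{mR}(f)$ is the maximum of the finite values of $f$ ($0$ if none); $\lambda^k_\ell$ and $\lambda^k_{\ge\ell}$ are the restrictions of $\lambda^k$ to $V^{J_\ell}$ and $V^{\ge J_\ell}$. The $\mathcal{O}$ is with respect to the game parameters $|V|,|\Pi|$. *)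

theory Defs
  imports Main "HOL-Library.Extended_Nat"
begin

record qgame =
  players :: "nat set"
  verts   :: "nat set"
  part    :: "nat \<Rightarrow> nat set"
  edges   :: "(nat \<times> nat) set"
  targ    :: "nat \<Rightarrow> nat set"
  init    :: nat

definition wf_game :: "qgame \<Rightarrow> bool" where
  "wf_game G \<longleftrightarrow>
     finite (players G) \<and> finite (verts G) \<and> card (verts G) \<ge> 2 \<and>
     card (players G) \<le> card (verts G) \<and>
     (\<forall>i\<in>players G. part G i \<subseteq> verts G) \<and>
     (\<forall>i\<in>players G. \<forall>j\<in>players G. i \<noteq> j \<longrightarrow> part G i \<inter> part G j = {}) \<and>
     (\<Union>i\<in>players G. part G i) = verts G \<and>
     edges G \<subseteq> verts G \<times> verts G \<and>
     (\<forall>v\<in>verts G. \<exists>v'. (v, v') \<in> edges G) \<and>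
     (\<forall>i\<in>players G. targ G i \<subseteq> verts G) \<and>
     init G \<in> verts G"

type_synonym xvert = "nat \<times> nat set"

definition XV :: "qgame \<Rightarrow> xvert set" where
  "XV G = verts G \<times> Pow (players G)"

definition XE :: "qgame \<Rightarrow> (xvert \<times> xvert) set" where
  "XE G = {((v, I), (v', I')). (v, v') \<in> edges G \<and> I \<subseteq> players G \<and>
                               I' = I \<union> {i \<in> players G. v' \<in> targ G i}}"

definition XVi :: "qgame \<Rightarrow> nat \<Rightarrow> xvert set" where
  "XVi G i = {(v, I). v \<in> part G i \<and> I \<subseteq> players G}"

definition x0 :: "qgame \<Rightarrow> xvert" where
  "x0 G = (init G, {i \<in> players G. init G \<in> targ G i})"

definition owner :: "qgame \<Rightarrow> nat \<Rightarrow> nat" where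
  "owner G v = (THE i. i \<in> players G \<and> v \<in> part G i)"

definition is_play :: "qgame \<Rightarrow> (nat \<Rightarrow> xvert) \<Rightarrow> bool" where
  "is_play G \<rho> \<longleftrightarrow> (\<forall>n. (\<rho> n, \<rho> (Suc n)) \<in> XE G)"

definition xcost :: "nat \<Rightarrow> (nat \<Rightarrow> xvert) \<Rightarrow> enat" where
  "xcost i \<rho> = (if \<exists>k. i \<in> snd (\<rho> k) then enat (LEAST k. i \<in> snd (\<rho> k)) else \<infinity>)"

definition consistent :: "qgame \<Rightarrow> (xvert \<Rightarrow> enat) \<Rightarrow> (nat \<Rightarrow> xvert) \<Rightarrow> bool" where
  "consistent G lam \<rho> \<longleftrightarrow>
     (\<forall>n. \<forall>i\<in>players G. \<rho> n \<in> XVi G i \<longrightarrow> xcost i (\<lambda>k. \<rho> (n + k)) \<le> lam (\<rho> n))"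

definition Reach :: "qgame \<Rightarrow> xvert set" where
  "Reach G = {u. (x0 G, u) \<in> (XE G)\<^sup>*}"

definition Iset :: "qgame \<Rightarrow> nat set set" where
  "Iset G = snd ` Reach G"

definition Nidx :: "qgame \<Rightarrow> nat" where
  "Nidx G = card (Iset G)"

definition valid_order :: "qgame \<Rightarrow> (nat \<Rightarrow> nat set) \<Rightarrow> bool" where
  "valid_order G J \<longleftrightarrow> bij_betw J {1..Nidx G} (Iset G) \<and>
     (\<forall>m\<in>{1..Nidx G}. \<forall>n\<in>{1..Nidx G}.
        J m \<noteq> J n \<and> (\<exists>v v'. ((v, J m), (v', J n)) \<in> (XE G)\<^sup>*) \<longrightarrow> m < n)"

definition VJ :: "qgame \<Rightarrow> (nat \<Rightarrow> nat set) \<Rightarrow> nat \<Rightarrow> xvert set" where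
  "VJ G J n = {(v, J n) | v. v \<in> verts G}"

definition Vge :: "qgame \<Rightarrow> (nat \<Rightarrow> nat set) \<Rightarrow> nat \<Rightarrow> xvert set" where
  "Vge G J n = (\<Union>m\<in>{n..Nidx G}. VJ G J m)"

definition lam0 :: "qgame \<Rightarrow> xvert \<Rightarrow> enat" where
  "lam0 G u = (if u \<in> XV G \<and> owner G (fst u) \<in> snd u then 0 else \<infinity>)"

text \<open>Update of lam with respect to the vertex set S (= V^{\<ge> J_n}).\<close>
definition upd :: "qgame \<Rightarrow> (xvert \<Rightarrow> enat) \<Rightarrow> xvert set \<Rightarrow> xvert \<Rightarrow> enat" where
  "upd G lam S u =
     (if u \<in> S then
        (let i = owner G (fst u) in
          if i \<in> snd u then 0
          else 1 + (INF u'\<in>{u'. (u, u') \<in> XE G}.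
                      SUP \<rho>\<in>{\<rho>. is_play G \<rho> \<and> \<rho> 0 = u' \<and> consistent G lam \<rho>}. xcost i \<rho>))
      else lam u)"

primrec lseq :: "qgame \<Rightarrow> (nat \<Rightarrow> nat set) \<Rightarrow> nat \<Rightarrow> (xvert \<Rightarrow> enat) \<times> nat" where
  "lseq G J 0 = (lam0 G, Nidx G)"
| "lseq G J (Suc k) =
     (let l = fst (lseq G J k); n = snd (lseq G J k); l' = upd G l (Vge G J n)
      in (l', if l' = l \<and> n > 1 then n - 1 else n))"

definition lam :: "qgame \<Rightarrow> (nat \<Rightarrow> nat set) \<Rightarrow> nat \<Rightarrow> xvert \<Rightarrow> enat" where
  "lam G J k = fst (lseq G J k)"

definition mR :: "(xvert \<Rightarrow> enat) \<Rightarrow> xvert set \<Rightarrow> nat" where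
  "mR f S = Max (insert 0 {the_enat (f u) | u. u \<in> S \<and> f u \<noteq> \<infinity>})"

end

theory Submission
  imports Defs
begin

(* A finite label lambda^(k+1)(u) at a vertex whose owner i has not yet reached its target is one
   plus the worst cost for i of the lambda^k-consistent plays from some successor u', all of which
   reach F_i. Call a time t of such a play settled if every player owning a finitely labelled
   vertex visited up to t has reached its own target by t. Before F_i is reached, settled times
   carry pairwise distinct vertices: looping between a repetition would give a consistent play
   from u' that avoids F_i. An unsettled time lies at most B steps before the first target visit
   of some player, where B bounds the finite labels of the vertices the play can visit, i.e. of
   those w with I(u) contained in I(w). Hence the new label is at most 1 + |V^X| + |Pi| B.

   Labels only decrease along the sequence. Ranking w by (|Pi| - |I(w)|) |V| plus the number of
   finitely labelled vertices in its layer I(w), all those w rank strictly below u once u gets its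
   first finite label. So the finite labels are bounded by iterating x |-> 1 + |V^X| + |Pi| x
   at most (|Pi| + 1) |V| times, which is below |V|^((|V|+3)(|Pi|+2)). *)

lemma XE_snd_mono: "(x, y) \<in> XE G \<Longrightarrow> snd x \<subseteq> snd y"
  by (cases x; cases y) (auto simp: XE_def)

lemma XE_in_XV: "wf_game G \<Longrightarrow> (x, y) \<in> XE G \<Longrightarrow> x \<in> XV G \<and> y \<in> XV G"
  by (cases x; cases y) (auto simp: XE_def XV_def wf_game_def)

lemma Reach_subset_XV:
  assumes wf: "wf_game G"
  shows "Reach G \<subseteq> XV G"
proof
  fix u assume "u \<in> Reach G"
  then have "(x0 G, u) \<in> (XE G)\<^sup>*" by (simp add: Reach_def)
  then show "u \<in> XV G"
  proof (induction rule: rtrancl_induct)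
    case base show ?case using wf by (auto simp: x0_def XV_def wf_game_def)
  next
    case (step y z) then show ?case using XE_in_XV[OF wf] by blast
  qed
qed

lemma finite_XV: "wf_game G \<Longrightarrow> finite (XV G)"
  by (simp add: XV_def wf_game_def)

lemma card_XV: "wf_game G \<Longrightarrow> card (XV G) = card (verts G) * 2 ^ card (players G)"
  by (simp add: XV_def card_cartesian_product card_Pow wf_game_def)

lemma is_play_in_XV: "wf_game G \<Longrightarrow> is_play G \<rho> \<Longrightarrow> \<rho> n \<in> XV G"
  using XE_in_XV unfolding is_play_def by blast

lemma is_play_snd_mono: "is_play G \<rho> \<Longrightarrow> m \<le> n \<Longrightarrow> snd (\<rho> m) \<subseteq> snd (\<rho> n)"
  using lift_Suc_mono_le[of "\<lambda>n. snd (\<rho> n)"] XE_snd_mono unfolding is_play_def by blast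

lemma xcost_le_enat: "j \<in> snd (\<rho> s) \<Longrightarrow> xcost j \<rho> \<le> enat s"
  unfolding xcost_def by (auto intro: Least_le)

lemma xcost_eq_enatD: "xcost j \<rho> = enat c \<Longrightarrow> j \<in> snd (\<rho> c)"
  unfolding xcost_def by (auto split: if_splits intro: LeastI)

lemma xcost_eq_infinity: "(\<And>k. j \<notin> snd (\<rho> k)) \<Longrightarrow> xcost j \<rho> = \<infinity>"
  unfolding xcost_def by auto

lemma xcost_le_if_prefix:
  assumes prefix: "\<And>k. k \<le> m \<Longrightarrow> \<rho>' k = \<rho> k" and reached: "j \<in> snd (\<rho>' m)"
  shows "xcost j \<rho>' \<le> xcost j \<rho>"
proof (cases "xcost j \<rho>")
  case (enat s)
  show ?thesis
  proof (cases "s \<le> m")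
    case True
    then have "j \<in> snd (\<rho>' s)" using xcost_eq_enatD[OF enat] prefix by simp
    then show ?thesis using enat by (simp add: xcost_le_enat)
  next
    case False
    have "xcost j \<rho>' \<le> enat m" using reached by (rule xcost_le_enat)
    also have "\<dots> \<le> enat s" using False by simp
    finally show ?thesis using enat by simp
  qed
qed simp

definition loop_index :: "nat \<Rightarrow> nat \<Rightarrow> nat \<Rightarrow> nat" where
  "loop_index a b n = (if n < a then n else a + (n - a) mod (b - a))"

lemma loop_index_less:
  assumes "a < b"
  shows "loop_index a b n < b"
proof -
  have "(n - a) mod (b - a) < b - a" using assms by simp
  then have "a + (n - a) mod (b - a) < b" by linarith
  then show ?thesis using assms by (simp add: loop_index_def)
qed

lemma loop_index_eq: "n \<le> a \<Longrightarrow> loop_index a b n = n"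
  by (auto simp: loop_index_def)

lemma loop_index_ge: "a \<le> n \<Longrightarrow> a \<le> loop_index a b n"
  by (simp add: loop_index_def)

lemma loop_index_Suc:
  assumes "a < b"
  shows "loop_index a b (Suc n) =
           (if loop_index a b n = b - 1 then a else Suc (loop_index a b n))"
proof (cases "n < a")
  case True
  then show ?thesis using assms by (auto simp: loop_index_def)
next
  case False
  then have "Suc n - a = Suc (n - a)" by simp
  then show ?thesis using False assms by (auto simp: loop_index_def mod_Suc)
qed

lemma is_play_loop:
  assumes play: "is_play G \<rho>" and "a < b" and repeat: "\<rho> a = \<rho> b"
  shows "is_play G (\<rho> \<circ> loop_index a b)"
  unfolding is_play_def
proof
  fix n
  have "(\<rho> (b - 1), \<rho> (Suc (b - 1))) \<in> XE G" using play by (simp add: is_play_def)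
  then have "(\<rho> (b - 1), \<rho> a) \<in> XE G" using \<open>a < b\<close> repeat by simp
  then show "((\<rho> \<circ> loop_index a b) n, (\<rho> \<circ> loop_index a b) (Suc n)) \<in> XE G"
    using play loop_index_Suc[OF \<open>a < b\<close>, of n] by (auto simp: is_play_def)
qed

definition settled :: "qgame \<Rightarrow> (xvert \<Rightarrow> enat) \<Rightarrow> (nat \<Rightarrow> xvert) \<Rightarrow> nat \<Rightarrow> bool" where
  "settled G lm \<rho> t \<longleftrightarrow>
     (\<forall>q\<le>t. \<forall>j\<in>players G. \<rho> q \<in> XVi G j \<and> lm (\<rho> q) \<noteq> \<infinity> \<longrightarrow> j \<in> snd (\<rho> t))"

lemma consistent_loop:
  assumes play: "is_play G \<rho>" and cons: "consistent G lm \<rho>"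
    and "a < b" and repeat: "\<rho> a = \<rho> b" and settled: "settled G lm \<rho> b"
  shows "consistent G lm (\<rho> \<circ> loop_index a b)"
  unfolding consistent_def
proof (intro allI ballI impI)
  fix n j
  let ?\<rho>' = "\<rho> \<circ> loop_index a b"
  assume j: "j \<in> players G" and owned: "?\<rho>' n \<in> XVi G j"
  show "xcost j (\<lambda>k. ?\<rho>' (n + k)) \<le> lm (?\<rho>' n)"
  proof (cases "lm (?\<rho>' n) = \<infinity>")
    case False
    have "loop_index a b n \<le> b" using loop_index_less[OF \<open>a < b\<close>] less_imp_le by blast
    then have "j \<in> snd (\<rho> a)"
      using settled j owned False repeat unfolding settled_def by auto
    show ?thesis
    proof (cases "a \<le> n")
      case True
      then have "j \<in> snd (?\<rho>' (n + 0))"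
        using \<open>j \<in> snd (\<rho> a)\<close> is_play_snd_mono[OF play loop_index_ge] by auto
      then have "xcost j (\<lambda>k. ?\<rho>' (n + k)) \<le> enat 0" by (rule xcost_le_enat)
      then show ?thesis by (simp add: zero_enat_def[symmetric])
    next
      case False
      then have "xcost j (\<lambda>k. ?\<rho>' (n + k)) \<le> xcost j (\<lambda>k. \<rho> (n + k))"
        using \<open>j \<in> snd (\<rho> a)\<close>
        by (intro xcost_le_if_prefix[where m = "a - n"]) (auto simp: loop_index_eq)
      also have "\<dots> \<le> lm (?\<rho>' n)"
        using cons j owned False loop_index_eq[of n a b] by (auto simp: consistent_def)
      finally show ?thesis .
    qed
  qed simp
qed

lemma card_settled_times_le:
  assumes wf: "wf_game G" and play: "is_play G \<rho>" and cons: "consistent G lm \<rho>"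
    and before: "\<forall>s<T. i \<notin> snd (\<rho> s)"
    and reach: "\<forall>\<rho>'. is_play G \<rho>' \<and> \<rho>' 0 = \<rho> 0 \<and> consistent G lm \<rho>' \<longrightarrow> xcost i \<rho>' \<noteq> \<infinity>"
  shows "card {t. t < T \<and> settled G lm \<rho> t} \<le> card (XV G)"
proof -
  have "\<rho> a \<noteq> \<rho> b" if "a < b" "b < T" "settled G lm \<rho> b" for a b
  proof
    assume repeat: "\<rho> a = \<rho> b"
    let ?\<rho>' = "\<rho> \<circ> loop_index a b"
    have "is_play G ?\<rho>'" "consistent G lm ?\<rho>'"
      using is_play_loop[OF play \<open>a < b\<close> repeat]
        consistent_loop[OF play cons that(1) repeat that(3)]
      by auto
    moreover have "?\<rho>' 0 = \<rho> 0" by (simp add: loop_index_eq)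
    moreover have "loop_index a b k < T" for k
      using loop_index_less[OF \<open>a < b\<close>] \<open>b < T\<close> by (rule order.strict_trans)
    then have "xcost i ?\<rho>' = \<infinity>" using before by (intro xcost_eq_infinity) simp
    ultimately show False using reach by blast
  qed
  then have "inj_on \<rho> {t. t < T \<and> settled G lm \<rho> t}"
    by (intro linorder_inj_onI') auto
  then show ?thesis
    using card_inj_on_le finite_XV[OF wf] is_play_in_XV[OF wf play] by blast
qed

definition first_visit :: "nat \<Rightarrow> (nat \<Rightarrow> xvert) \<Rightarrow> nat" where
  "first_visit j \<rho> = (LEAST c. j \<in> snd (\<rho> c))"

lemma unsettled_times_subset:
  assumes play: "is_play G \<rho>" and cons: "consistent G lm \<rho>"
    and bound: "\<forall>q. lm (\<rho> q) \<noteq> \<infinity> \<longrightarrow> lm (\<rho> q) \<le> enat B"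
  shows "{t. \<not> settled G lm \<rho> t}
           \<subseteq> (\<Union>j\<in>players G. {first_visit j \<rho> - B..<first_visit j \<rho>})"
proof
  fix t assume "t \<in> {t. \<not> settled G lm \<rho> t}"
  then obtain q j where q: "q \<le> t" "j \<in> players G" "\<rho> q \<in> XVi G j" "lm (\<rho> q) \<noteq> \<infinity>"
    and not_yet: "j \<notin> snd (\<rho> t)"
    by (auto simp: settled_def)
  let ?c = "first_visit j \<rho>"
  have "xcost j (\<lambda>k. \<rho> (q + k)) \<le> lm (\<rho> q)" using cons q by (auto simp: consistent_def)
  also have "\<dots> \<le> enat B" using bound q by blast
  finally obtain s where s: "xcost j (\<lambda>k. \<rho> (q + k)) = enat s" "s \<le> B"
    by (metis enat_ile enat_ord_simps(1))
  have "j \<in> snd (\<rho> (q + s))" using xcost_eq_enatD[OF s(1)] by simp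
  then have "?c \<le> q + s" "j \<in> snd (\<rho> ?c)"
    unfolding first_visit_def by (auto intro: Least_le LeastI)
  moreover have "t < ?c"
    using is_play_snd_mono[OF play, of ?c t] \<open>j \<in> snd (\<rho> ?c)\<close> not_yet by (meson not_less subsetD)
  ultimately have "t \<in> {?c - B..<?c}" using q(1) s(2) by auto
  then show "t \<in> (\<Union>j\<in>players G. {first_visit j \<rho> - B..<first_visit j \<rho>})"
    using q(2) by blast
qed

lemma xcost_consistent_play_le:
  assumes wf: "wf_game G" and play: "is_play G \<rho>" and cons: "consistent G lm \<rho>"
    and cost: "xcost i \<rho> = enat T"
    and bound: "\<forall>q. lm (\<rho> q) \<noteq> \<infinity> \<longrightarrow> lm (\<rho> q) \<le> enat B"
    and reach: "\<forall>\<rho>'. is_play G \<rho>' \<and> \<rho>' 0 = \<rho> 0 \<and> consistent G lm \<rho>' \<longrightarrow> xcost i \<rho>' \<noteq> \<infinity>"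
  shows "T \<le> card (XV G) + card (players G) * B"
proof -
  have fin_players: "finite (players G)" using wf by (simp add: wf_game_def)
  have before: "\<forall>s<T. i \<notin> snd (\<rho> s)"
    using cost by (auto simp: xcost_def split: if_splits dest: not_less_Least)
  have "card {t. t < T \<and> \<not> settled G lm \<rho> t}
          \<le> card (\<Union>j\<in>players G. {first_visit j \<rho> - B..<first_visit j \<rho>})"
    using unsettled_times_subset[OF play cons bound] fin_players by (intro card_mono) auto
  also have "\<dots> \<le> (\<Sum>j\<in>players G. card {first_visit j \<rho> - B..<first_visit j \<rho>})"
    using fin_players by (rule card_UN_le)
  also have "\<dots> \<le> (\<Sum>j\<in>players G. B)" by (intro sum_mono) simp
  also have "\<dots> = card (players G) * B" by simp
  finally have unsettled: "card {t. t < T \<and> \<not> settled G lm \<rho> t} \<le> card (players G) * B" .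
  have "{..<T} = {t. t < T \<and> settled G lm \<rho> t} \<union> {t. t < T \<and> \<not> settled G lm \<rho> t}" by auto
  then have "T \<le> card {t. t < T \<and> settled G lm \<rho> t} + card {t. t < T \<and> \<not> settled G lm \<rho> t}"
    by (metis card_Un_le card_lessThan)
  then show ?thesis
    using card_settled_times_le[OF wf play cons before reach] unsettled by linarith
qed

lemma upd_outside: "u \<notin> S \<Longrightarrow> upd G lm S u = lm u"
  by (simp add: upd_def)

lemma upd_reached: "u \<in> S \<Longrightarrow> owner G (fst u) \<in> snd u \<Longrightarrow> upd G lm S u = 0"
  by (simp add: upd_def Let_def)

lemma upd_mono:
  assumes "u \<in> S" "u \<in> S'" and le: "\<And>x. lm' x \<le> lm x"
  shows "upd G lm' S' u \<le> upd G lm S u"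
proof (cases "owner G (fst u) \<in> snd u")
  case True
  then show ?thesis using assms by (simp add: upd_reached)
next
  case False
  have "consistent G lm \<rho>" if "consistent G lm' \<rho>" for \<rho>
    using that le unfolding consistent_def by (meson order_trans)
  then show ?thesis
    using assms(1,2) False unfolding upd_def Let_def
    by simp (intro INF_mono' SUP_subset_mono; blast)
qed

lemma upd_le:
  assumes wf: "wf_game G" and "u \<in> S" and not_reached: "owner G (fst u) \<notin> snd u"
    and finite_upd: "upd G lm S u \<noteq> \<infinity>"
    and bound: "\<forall>w\<in>XV G. snd u \<subseteq> snd w \<and> lm w \<noteq> \<infinity> \<longrightarrow> lm w \<le> enat B"
  shows "upd G lm S u \<le> enat (1 + card (XV G) + card (players G) * B)"
proof -
  define i where "i = owner G (fst u)"
  define plays where "plays u' = {\<rho>. is_play G \<rho> \<and> \<rho> 0 = u' \<and> consistent G lm \<rho>}" for u'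
  define worst where "worst u' = (SUP \<rho>\<in>plays u'. xcost i \<rho>)" for u'
  let ?K = "card (XV G) + card (players G) * B"
  have upd_eq: "upd G lm S u = 1 + (INF u'\<in>{u'. (u, u') \<in> XE G}. worst u')"
    using \<open>u \<in> S\<close> not_reached by (simp add: upd_def Let_def i_def worst_def plays_def)
  then have "(INF u'\<in>{u'. (u, u') \<in> XE G}. worst u') \<noteq> \<infinity>"
    using finite_upd by (metis plus_enat_simps(3))
  then obtain u' where edge: "(u, u') \<in> XE G" and finite_worst: "worst u' \<noteq> \<infinity>"
    by (metis (mono_tags, lifting) INF_top_conv mem_Collect_eq top_enat_def)
  have reach: "xcost i \<rho> \<noteq> \<infinity>" if \<rho>: "\<rho> \<in> plays u'" for \<rho>
  proof
    assume "xcost i \<rho> = \<infinity>"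
    then have "\<infinity> \<le> worst u'" using SUP_upper[OF \<rho>, of "xcost i"] by (simp add: worst_def)
    then show False using finite_worst by (simp add: top_enat_def[symmetric] top_unique)
  qed
  have "xcost i \<rho> \<le> enat ?K" if \<rho>: "\<rho> \<in> plays u'" for \<rho>
  proof -
    obtain T where T: "xcost i \<rho> = enat T" using reach[OF \<rho>] by auto
    have play: "is_play G \<rho>" and start: "\<rho> 0 = u'" and cons: "consistent G lm \<rho>"
      using \<rho> by (auto simp: plays_def)
    have "snd u \<subseteq> snd (\<rho> q)" for q
      using XE_snd_mono[OF edge] is_play_snd_mono[OF play, of 0 q] start by auto
    then have "\<forall>q. lm (\<rho> q) \<noteq> \<infinity> \<longrightarrow> lm (\<rho> q) \<le> enat B"
      using bound is_play_in_XV[OF wf play] by simp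
    moreover have "\<forall>\<rho>'. is_play G \<rho>' \<and> \<rho>' 0 = \<rho> 0 \<and> consistent G lm \<rho>' \<longrightarrow> xcost i \<rho>' \<noteq> \<infinity>"
      using reach start by (auto simp: plays_def)
    ultimately show ?thesis
      using xcost_consistent_play_le[OF wf play cons T] T by simp
  qed
  then have "worst u' \<le> enat ?K" unfolding worst_def by (rule SUP_least)
  moreover have "(INF u'\<in>{u'. (u, u') \<in> XE G}. worst u') \<le> worst u'"
    using edge by (intro INF_lower) simp
  ultimately have "(INF u'\<in>{u'. (u, u') \<in> XE G}. worst u') \<le> enat ?K"
    by (rule order_trans[rotated])
  then have "upd G lm S u \<le> 1 + enat ?K" unfolding upd_eq by (rule add_left_mono)
  then show ?thesis by (simp add: one_enat_def)
qed

lemma lam_0 [simp]: "lam G J 0 = lam0 G"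
  by (simp add: lam_def)

lemma lam_Suc: "lam G J (Suc k) = upd G (lam G J k) (Vge G J (snd (lseq G J k)))"
  by (simp add: lam_def Let_def)

lemma Vge_antimono: "n' \<le> n \<Longrightarrow> Vge G J n \<subseteq> Vge G J n'"
  unfolding Vge_def by (intro UN_mono) auto

lemma Vge_lseq_mono: "Vge G J (snd (lseq G J k)) \<subseteq> Vge G J (snd (lseq G J (Suc k)))"
  by (rule Vge_antimono) (simp add: Let_def)

lemma lam_eq_lam0_outside: "u \<notin> Vge G J (snd (lseq G J k)) \<Longrightarrow> lam G J k u = lam0 G u"
proof (induction k)
  case (Suc k)
  then have "u \<notin> Vge G J (snd (lseq G J k))" using Vge_lseq_mono by blast
  then show ?case using Suc.IH by (simp add: lam_Suc upd_outside)
qed simp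

lemma lam_le_lam0: "lam G J k u \<le> lam0 G u"
proof (induction k)
  case (Suc k)
  then show ?case
    by (cases "u \<in> Vge G J (snd (lseq G J k))")
      (auto simp: lam_Suc upd_outside upd_def Let_def lam0_def)
qed simp

lemma lam_Suc_le: "lam G J (Suc k) u \<le> lam G J k u"
proof (induction k arbitrary: u)
  case 0
  show ?case using lam_le_lam0[of G J 1 u] by simp
next
  case (Suc k)
  let ?S = "\<lambda>k. Vge G J (snd (lseq G J k))"
  consider "u \<notin> ?S (Suc k)" | "u \<in> ?S k" | "u \<in> ?S (Suc k)" "u \<notin> ?S k" by blast
  then show ?case
  proof cases
    case 1
    then show ?thesis by (simp add: lam_Suc[of G J "Suc k"] upd_outside)
  next
    case 2
    then show ?thesis
      unfolding lam_Suc[of G J "Suc k"] lam_Suc[of G J k]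
      using Vge_lseq_mono Suc.IH by (intro upd_mono) (auto simp: lam_Suc)
  next
    case 3
    then have "lam G J (Suc k) u = lam0 G u"
      by (simp add: lam_Suc upd_outside lam_eq_lam0_outside)
    then show ?thesis using lam_le_lam0[of G J "Suc (Suc k)" u] by simp
  qed
qed

definition finite_layer :: "qgame \<Rightarrow> (xvert \<Rightarrow> enat) \<Rightarrow> nat set \<Rightarrow> xvert set" where
  "finite_layer G lm I = {x \<in> XV G. snd x = I \<and> lm x \<noteq> \<infinity>}"

definition rank :: "qgame \<Rightarrow> (xvert \<Rightarrow> enat) \<Rightarrow> xvert \<Rightarrow> nat" where
  "rank G lm w =
     (card (players G) - card (snd w)) * card (verts G) + card (finite_layer G lm (snd w))"

lemma finite_finite_layer: "wf_game G \<Longrightarrow> finite (finite_layer G lm I)"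
  using finite_XV by (auto simp: finite_layer_def)

lemma card_finite_layer_le: "wf_game G \<Longrightarrow> card (finite_layer G lm I) \<le> card (verts G)"
proof -
  assume wf: "wf_game G"
  have "inj_on fst (finite_layer G lm I)" by (auto simp: finite_layer_def inj_on_def prod_eq_iff)
  moreover have "fst ` finite_layer G lm I \<subseteq> verts G" by (auto simp: finite_layer_def XV_def)
  moreover have "finite (verts G)" using wf by (simp add: wf_game_def)
  ultimately show ?thesis by (rule card_inj_on_le)
qed

lemma rank_le:
  assumes "wf_game G"
  shows "rank G lm w \<le> (card (players G) + 1) * card (verts G)"
proof -
  have "(card (players G) - card (snd w)) * card (verts G) \<le> card (players G) * card (verts G)"
    by (rule mult_le_mono1) simp
  moreover have "(card (players G) + 1) * card (verts G)
                  = card (players G) * card (verts G) + card (verts G)"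
    by simp
  ultimately show ?thesis
    using card_finite_layer_le[OF assms, of lm "snd w"] unfolding rank_def by linarith
qed

lemma finite_layer_mono:
  assumes le: "\<And>x. lm' x \<le> lm x"
  shows "finite_layer G lm I \<subseteq> finite_layer G lm' I"
proof -
  have "lm' x \<noteq> \<infinity>" if "lm x \<noteq> \<infinity>" for x
    using le[of x] that by (metis enat_ord_simps(5))
  then show ?thesis unfolding finite_layer_def by blast
qed

lemma rank_mono: "wf_game G \<Longrightarrow> (\<And>x. lm' x \<le> lm x) \<Longrightarrow> rank G lm w \<le> rank G lm' w"
  unfolding rank_def by (simp add: card_mono finite_finite_layer finite_layer_mono)

lemma rank_pos:
  assumes wf: "wf_game G" and "u \<in> XV G" "lm u \<noteq> \<infinity>"
  shows "0 < rank G lm u"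
proof -
  have "u \<in> finite_layer G lm (snd u)" using assms(2,3) by (simp add: finite_layer_def)
  then have "finite_layer G lm (snd u) \<noteq> {}" by blast
  then show ?thesis using finite_finite_layer[OF wf] by (simp add: rank_def card_gt_0_iff)
qed

lemma rank_less_new_label:
  assumes wf: "wf_game G" and le: "\<And>x. lm' x \<le> lm x"
    and u: "u \<in> XV G" "lm u = \<infinity>" "lm' u \<noteq> \<infinity>"
    and w: "w \<in> XV G" "snd u \<subseteq> snd w" "lm w \<noteq> \<infinity>"
  shows "rank G lm w < rank G lm' u"
proof -
  let ?p = "card (players G)" and ?n = "card (verts G)"
  have u_new: "u \<in> finite_layer G lm' (snd u)" using u by (simp add: finite_layer_def)
  show ?thesis
  proof (cases "snd w = snd u")
    case True
    have "u \<notin> finite_layer G lm (snd u)" using u(2) by (simp add: finite_layer_def)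
    then have "finite_layer G lm (snd u) \<subset> finite_layer G lm' (snd u)"
      using finite_layer_mono[of lm' lm, OF le] u_new by blast
    then have "card (finite_layer G lm (snd u)) < card (finite_layer G lm' (snd u))"
      by (rule psubset_card_mono[OF finite_finite_layer[OF wf]])
    then show ?thesis using True by (simp add: rank_def)
  next
    case False
    have fin_players: "finite (players G)" using wf by (simp add: wf_game_def)
    have "snd w \<subseteq> players G" using w(1) by (auto simp: XV_def)
    then have "card (snd u) < card (snd w)" "card (snd w) \<le> ?p"
      using False w(2) by (auto intro: psubset_card_mono card_mono finite_subset[OF _ fin_players])
    then have "?p - card (snd w) + 1 \<le> ?p - card (snd u)" by linarith
    have "rank G lm w \<le> (?p - card (snd w)) * ?n + ?n"
      using card_finite_layer_le[OF wf, of lm "snd w"] by (simp add: rank_def)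
    also have "\<dots> = (?p - card (snd w) + 1) * ?n" by simp
    also have "\<dots> \<le> (?p - card (snd u)) * ?n"
      using \<open>?p - card (snd w) + 1 \<le> ?p - card (snd u)\<close> by (rule mult_le_mono1)
    also have "\<dots> < rank G lm' u"
      using u_new finite_finite_layer[OF wf] by (simp add: rank_def card_gt_0_iff; blast)
    finally show ?thesis .
  qed
qed

definition label_bound :: "nat \<Rightarrow> nat \<Rightarrow> nat \<Rightarrow> nat" where
  "label_bound a p m = ((\<lambda>x. a + p * x) ^^ m) 0"

lemma label_bound_0 [simp]: "label_bound a p 0 = 0"
  by (simp add: label_bound_def)

lemma label_bound_Suc [simp]: "label_bound a p (Suc m) = a + p * label_bound a p m"
  by (simp add: label_bound_def)

lemma label_bound_mono: "m \<le> m' \<Longrightarrow> label_bound a p m \<le> label_bound a p m'"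
proof (induction m' arbitrary: m)
  case (Suc m')
  then show ?case by (cases m) auto
qed simp

lemma label_bound_le:
  assumes "p \<le> n" "1 \<le> n"
  shows "label_bound a p m \<le> m * a * n ^ m"
proof (induction m)
  case (Suc m)
  have "label_bound a p (Suc m) \<le> a + n * (m * a * n ^ m)"
    using Suc assms by (simp add: mult_le_mono)
  also have "\<dots> \<le> a * n ^ Suc m + m * a * n ^ Suc m"
    using assms by (simp add: algebra_simps)
  also have "\<dots> = Suc m * a * n ^ Suc m" by (simp add: algebra_simps)
  finally show ?case .
qed simp

lemma label_bound_le_power:
  assumes n2: "2 \<le> n" and pn: "p \<le> n"
  shows "label_bound (1 + n * 2 ^ p) p ((p + 1) * n) \<le> n ^ ((n + 3) * (p + 2))"
proof -
  define a where "a = 1 + n * 2 ^ p"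
  define m where "m = (p + 1) * n"
  have "n * 2 ^ p \<le> n ^ (p + 1)" using power_mono[of 2 n p] n2 by simp
  moreover have "1 \<le> n ^ (p + 1)" using n2 by simp
  moreover have "2 * n ^ (p + 1) \<le> n * n ^ (p + 1)" using n2 by (rule mult_le_mono1)
  then have "2 * n ^ (p + 1) \<le> n ^ (p + 2)" by simp
  ultimately have a: "a \<le> n ^ (p + 2)" unfolding a_def by linarith
  have "2 * n \<le> n * n" using n2 by simp
  then have "m \<le> n * n * n" unfolding m_def using pn n2 by (intro mult_le_mono1) linarith
  then have m: "m \<le> n ^ 3" by (simp add: power3_eq_cube)
  have "label_bound a p m \<le> m * a * n ^ m" using label_bound_le pn n2 by simp
  also have "\<dots> \<le> n ^ 3 * n ^ (p + 2) * n ^ m" using a m by (intro mult_le_mono) auto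
  also have "\<dots> = n ^ (3 + (p + 2) + m)" by (simp only: power_add)
  also have "\<dots> \<le> n ^ ((n + 3) * (p + 2))"
    using n2 by (intro power_increasing) (simp_all add: m_def algebra_simps)
  finally show ?thesis unfolding a_def m_def .
qed

lemma lam_le_label_bound:
  assumes wf: "wf_game G"
  shows "u \<in> XV G \<Longrightarrow> lam G J k u \<noteq> \<infinity> \<Longrightarrow>
    lam G J k u \<le> enat (label_bound (1 + card (XV G)) (card (players G)) (rank G (lam G J k) u))"
proof (induction k arbitrary: u)
  case 0
  then show ?case by (simp add: lam0_def zero_enat_def split: if_splits)
next
  case (Suc k)
  let ?lb = "label_bound (1 + card (XV G)) (card (players G))"
  have le: "\<And>x. lam G J (Suc k) x \<le> lam G J k x" by (rule lam_Suc_le)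
  show ?case
  proof (cases "lam G J k u = \<infinity>")
    case False
    have "lam G J (Suc k) u \<le> lam G J k u" by (rule le)
    also have "\<dots> \<le> enat (?lb (rank G (lam G J k) u))" using Suc False by blast
    also have "\<dots> \<le> enat (?lb (rank G (lam G J (Suc k)) u))"
      using rank_mono[OF wf le] by (simp add: label_bound_mono)
    finally show ?thesis .
  next
    case new: True
    let ?S = "Vge G J (snd (lseq G J k))"
    have "u \<in> ?S" using new Suc.prems(2) by (metis lam_Suc upd_outside)
    show ?thesis
    proof (cases "owner G (fst u) \<in> snd u")
      case True
      then show ?thesis using \<open>u \<in> ?S\<close> by (simp add: lam_Suc upd_reached zero_enat_def)
    next
      case False
      define r where "r = rank G (lam G J (Suc k)) u"
      have "lam G J k w \<le> enat (?lb (r - 1))"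
        if w: "w \<in> XV G" "snd u \<subseteq> snd w" "lam G J k w \<noteq> \<infinity>" for w
      proof -
        have "rank G (lam G J k) w < r"
          unfolding r_def using rank_less_new_label[OF wf le Suc.prems(1) new Suc.prems(2) w] .
        then have "?lb (rank G (lam G J k) w) \<le> ?lb (r - 1)" by (intro label_bound_mono) simp
        then show ?thesis using Suc.IH[OF w(1,3)] by (simp add: order_trans)
      qed
      then have "lam G J (Suc k) u \<le> enat (1 + card (XV G) + card (players G) * ?lb (r - 1))"
        using upd_le[OF wf \<open>u \<in> ?S\<close> False] Suc.prems(2) unfolding lam_Suc by blast
      also have "1 + card (XV G) + card (players G) * ?lb (r - 1) = ?lb r"
      proof -
        have "0 < r" unfolding r_def using Suc.prems by (intro rank_pos[OF wf])
        then have "r = Suc (r - 1)" by simp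
        then show ?thesis by (metis label_bound_Suc add.assoc)
      qed
      finally show ?thesis by (simp add: r_def)
    qed
  qed
qed

lemma lam_le_power:
  assumes wf: "wf_game G" and "u \<in> XV G" "lam G J k u \<noteq> \<infinity>"
  shows "lam G J k u \<le> enat (card (verts G) ^ ((card (verts G) + 3) * (card (players G) + 2)))"
proof -
  let ?p = "card (players G)" and ?n = "card (verts G)"
  have "lam G J k u \<le> enat (label_bound (1 + card (XV G)) ?p (rank G (lam G J k) u))"
    using lam_le_label_bound[OF wf assms(2,3)] .
  also have "\<dots> \<le> enat (label_bound (1 + card (XV G)) ?p ((?p + 1) * ?n))"
    using rank_le[OF wf] by (simp add: label_bound_mono)
  also have "\<dots> \<le> enat (?n ^ ((?n + 3) * (?p + 2)))"
    using wf label_bound_le_power[of ?n ?p] by (simp add: card_XV wf_game_def)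
  finally show ?thesis .
qed

lemma mR_le:
  assumes "\<forall>u\<in>S. f u \<noteq> \<infinity> \<longrightarrow> f u \<le> enat K"
  shows "mR f S \<le> K"
proof -
  have "{the_enat (f u) | u. u \<in> S \<and> f u \<noteq> \<infinity>} \<subseteq> {..K}"
    using assms by (auto simp: enat_ile)
  then show ?thesis unfolding mR_def by (intro Max.boundedI) (auto intro: finite_subset)
qed

lemma VJ_subset_XV:
  assumes wf: "wf_game G" and "valid_order G J" "m \<in> {1..Nidx G}"
  shows "VJ G J m \<subseteq> XV G"
proof -
  have "J m \<in> Iset G" using assms(2,3) by (auto simp: valid_order_def bij_betw_def)
  then have "J m \<subseteq> players G" using Reach_subset_XV[OF wf] by (auto simp: Iset_def XV_def)
  then show ?thesis by (auto simp: VJ_def XV_def)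
qed

lemma Vge_subset_XV:
  "wf_game G \<Longrightarrow> valid_order G J \<Longrightarrow> 1 \<le> l \<Longrightarrow> Vge G J l \<subseteq> XV G"
  unfolding Vge_def by (intro UN_least VJ_subset_XV) simp_all

lemma mR_lam_le_power:
  assumes "wf_game G" "S \<subseteq> XV G"
  shows "mR (lam G J k) S \<le> card (verts G) ^ ((card (verts G) + 3) * (card (players G) + 2))"
  using lam_le_power[OF assms(1)] assms(2) by (intro mR_le) blast

theorem corollary3p12:
  "\<exists>C::real. \<forall>G J. wf_game G \<and> valid_order G J \<longrightarrow>
     (\<forall>k. \<forall>l\<in>{1..Nidx G}.
        real (mR (lam G J k) (VJ G J l))
          \<le> C * real (card (verts G)) ^ ((card (verts G) + 3) * (card (players G) + 2)) \<and>
        real (mR (lam G J k) (Vge G J l))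
          \<le> C * real (card (verts G)) ^ ((card (verts G) + 3) * (card (players G) + 2)))"
proof -
  have "real (mR (lam G J k) S)
          \<le> real (card (verts G)) ^ ((card (verts G) + 3) * (card (players G) + 2))"
    if "wf_game G" "S \<subseteq> XV G" for G J k S
    using mR_lam_le_power[OF that] by (metis of_nat_le_iff of_nat_power)
  then show ?thesis
    using VJ_subset_XV Vge_subset_XV by (intro exI[of _ 1]) auto
qed

end
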